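(* Let $n\ge3$, $1\le j\le n-2$ and $K\in\mathcal K^n$. For $z\in\{\pm e_n\}$, one has $z\in\operatorname{ext}(K[j],B_L^{n-1}[n-1-j])$ if and only if $\dim TS(K,z)\ge j$. For $z\in\mathbb S^{n-1}\setminus\{\pm e_n\}$, one has $z\in\operatorname{ext}(K[j],B_L^{n-1}[n-1-j])$ if and only if $\dim TS(K,z)\ge j$ and $TS(K,z)\not\subseteq L$.
   Context: $\mathcal K^n$ is the set of convex bodies in $\mathbb R^n$; $L=e_n^\perp$, $B_L^{n-1}=B^n\cap L$; $K[m]$ means $K$ repeated $m$ times. For $K\in\mathcal K^n$, $z\ne o$: $F(K,z)=\{x\in K:\langle x,z\rangle=h_K(z)\}$; $N(K,x)=\{u:\langle x,u\rangle=h_K(u)\}$ is the normal cone at $x\in\partial K$, and $N(K,F)=N(K,x)$ for $x$ in the relative interior of a nonempty convex $F\subseteq K$. The touching cone $T(K,z)$ is the unique face of $N(K,F(K,z))$ containing $z$ in its relative interior, and the touching space is $TS(K,z)=T(K,z)^\perp$ (orthogonal complement of its linear span). For $K_1,\dots,K_{n-1}\in\mathcal K^n$, $z\in\mathbb S^{n-1}$ is $(K_1,\dots,K_{n-1})$-extreme if there are linear hyperplanes $E_i\supseteq T(K_i,z)$ with $\dim(E_1\cap\dots\cap E_{n-1})=1$; $\operatorname{ext}(K_1,\dots,K_{n-1})$ is the set of such $z$. *)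

theory Defs
  imports "HOL-Analysis.Analysis"
begin

definition convex_body :: "'a::euclidean_space set \<Rightarrow> bool" where
  "convex_body K \<longleftrightarrow> K \<noteq> {} \<and> compact K \<and> convex K"

definition supp :: "'a::euclidean_space set \<Rightarrow> 'a \<Rightarrow> real" where
  "supp K u = (SUP x\<in>K. x \<bullet> u)"

definition supp_set :: "'a::euclidean_space set \<Rightarrow> 'a \<Rightarrow> 'a set" where
  "supp_set K z = {x \<in> K. x \<bullet> z = supp K z}"

definition normal_cone :: "'a::euclidean_space set \<Rightarrow> 'a \<Rightarrow> 'a set" where
  "normal_cone K x = {u. x \<bullet> u = supp K u}"

definition normal_cone_set :: "'a::euclidean_space set \<Rightarrow> 'a set \<Rightarrow> 'a set" where
  "normal_cone_set K F = normal_cone K (SOME x. x \<in> rel_interior F)"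

definition touching_cone :: "'a::euclidean_space set \<Rightarrow> 'a \<Rightarrow> 'a set" where
  "touching_cone K z = (THE G. G face_of normal_cone_set K (supp_set K z) \<and> z \<in> rel_interior G)"

definition touching_space :: "'a::euclidean_space set \<Rightarrow> 'a \<Rightarrow> 'a set" where
  "touching_space K z = orthogonal_comp (span (touching_cone K z))"

definition lin_hyperplane :: "'a::euclidean_space set \<Rightarrow> bool" where
  "lin_hyperplane E \<longleftrightarrow> (\<exists>a. a \<noteq> 0 \<and> E = {x. a \<bullet> x = 0})"

definition ext_dirs :: "'a::euclidean_space set list \<Rightarrow> 'a set" where
  "ext_dirs Ks = {z. norm z = 1 \<and>
     (\<exists>E::nat \<Rightarrow> 'a set. (\<forall>i<length Ks. lin_hyperplane (E i) \<and> touching_cone (Ks ! i) z \<subseteq> E i)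
        \<and> dim (\<Inter>i\<in>{..<length Ks}. E i) = 1)}"

end

theory Submission
  imports Defs
begin

text \<open>
The touching space of the disc \<open>B_L\<close> at \<open>z\<close> is \<open>{e, z}\<^sup>\<bottom>\<close>, because the support
function of \<open>B_L\<close> is the norm of the projection onto \<open>L\<close>; it has dimension \<open>n - 1\<close>
for \<open>z = \<plusminus>e\<close> and \<open>n - 2\<close> otherwise. A hyperplane \<open>E\<^sub>i \<supseteq> T(K\<^sub>i, z)\<close> is the orthogonal
complement of some nonzero \<open>a\<^sub>i \<in> TS(K\<^sub>i, z)\<close>, and the \<open>E\<^sub>i\<close> meet in a line iff the
\<open>a\<^sub>i\<close> are linearly independent. For our list this means: some \<open>j\<close> independent
vectors of \<open>TS(K, z)\<close> together with \<open>{e, z}\<^sup>\<bottom>\<close> span at least \<open>n - 1\<close> dimensions. For \<open>z = \<plusminus>e\<close> only \<open>dim TS(K, z) \<ge> j\<close>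
is needed; otherwise one of the vectors must leave \<open>{e, z}\<^sup>\<bottom>\<close>, and as
\<open>TS(K, z) \<perp> z\<close> this happens iff \<open>TS(K, z) \<not>\<subseteq> L\<close>.
\<close>

lemma exists_face_of_rel_interior:
  fixes S :: "'a::euclidean_space set"
  assumes "convex S" "x \<in> S"
  shows "\<exists>F. F face_of S \<and> x \<in> rel_interior F"
  using assms
proof (induct S rule: measure_induct_rule[of "\<lambda>S. nat (aff_dim S + 1)"])
  case (less S)
  show ?case
  proof (cases "x \<in> rel_interior S")
    case True
    then show ?thesis using face_of_refl less.prems by blast
  next
    case False
    obtain a where "a \<noteq> 0" and le: "\<And>y. y \<in> S \<Longrightarrow> a \<bullet> x \<le> a \<bullet> y"
      and lt: "\<And>y. y \<in> rel_interior S \<Longrightarrow> a \<bullet> x < a \<bullet> y"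
      using supporting_hyperplane_rel_boundary[OF less.prems False] by blast
    define F where "F = S \<inter> {y. a \<bullet> y = a \<bullet> x}"
    have F: "F face_of S" unfolding F_def
      by (rule face_of_Int_supporting_hyperplane_ge) (use less.prems le in auto)
    obtain y where "y \<in> rel_interior S"
      using rel_interior_eq_empty less.prems by blast
    then have "y \<in> S" "y \<notin> F" using lt[of y] rel_interior_subset unfolding F_def by auto
    then have "F \<noteq> S" by blast
    then have "aff_dim F < aff_dim S" using face_of_aff_dim_lt F less.prems by blast
    moreover have "x \<in> F" using F_def less.prems by auto
    moreover have "aff_dim F \<ge> 0" using \<open>x \<in> F\<close> aff_dim_negative_iff[of F] by (metis empty_iff not_less)
    ultimately have "nat (aff_dim F + 1) < nat (aff_dim S + 1)" by linarith
    then obtain G where "G face_of F" "x \<in> rel_interior G"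
      using less.hyps[of F] \<open>x \<in> F\<close> face_of_imp_convex[OF F] by blast
    then show ?thesis using face_of_trans F by blast
  qed
qed

lemma supp_upper: "compact K \<Longrightarrow> x \<in> K \<Longrightarrow> x \<bullet> u \<le> supp K u"
  unfolding supp_def
  by (intro cSUP_upper bounded_imp_bdd_above compact_imp_bounded compact_continuous_image)
     (auto intro: continuous_intros)

lemma supp_least: "K \<noteq> {} \<Longrightarrow> (\<And>x. x \<in> K \<Longrightarrow> x \<bullet> u \<le> M) \<Longrightarrow> supp K u \<le> M"
  unfolding supp_def by (rule cSUP_least) auto

lemma supp_eqI:
  "compact K \<Longrightarrow> y \<in> K \<Longrightarrow> (\<And>x. x \<in> K \<Longrightarrow> x \<bullet> u \<le> y \<bullet> u) \<Longrightarrow> supp K u = y \<bullet> u"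
  by (metis antisym empty_iff supp_least supp_upper)

lemma supp_set_nonempty:
  assumes "convex_body K"
  shows "supp_set K u \<noteq> {}"
proof -
  have "compact ((\<lambda>x. x \<bullet> u) ` K)" "(\<lambda>x. x \<bullet> u) ` K \<noteq> {}"
    using assms unfolding convex_body_def
    by (auto intro!: compact_continuous_image continuous_intros)
  then obtain s where "s \<in> (\<lambda>x. x \<bullet> u) ` K" "\<forall>t\<in>(\<lambda>x. x \<bullet> u) ` K. t \<le> s"
    using compact_attains_sup by blast
  then obtain y where "y \<in> K" "\<And>x. x \<in> K \<Longrightarrow> x \<bullet> u \<le> y \<bullet> u" by auto
  then show ?thesis
    using assms supp_eqI[of K y u] unfolding convex_body_def supp_set_def by auto
qed

lemma normal_cone_eq:
  assumes "compact K" "x \<in> K"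
  shows "normal_cone K x = {u. \<forall>y\<in>K. y \<bullet> u \<le> x \<bullet> u}"
proof -
  have "x \<bullet> u = supp K u \<longleftrightarrow> (\<forall>y\<in>K. y \<bullet> u \<le> x \<bullet> u)" for u
    using supp_upper[OF assms(1)] supp_eqI[OF assms, of u] by auto
  then show ?thesis unfolding normal_cone_def by blast
qed

lemma convex_normal_cone:
  assumes "compact K" "x \<in> K"
  shows "convex (normal_cone K x)"
proof -
  have "normal_cone K x = (\<Inter>y\<in>K. {u. (y - x) \<bullet> u \<le> 0})"
    by (auto simp: normal_cone_eq[OF assms] inner_diff_left)
  then show ?thesis by (simp add: convex_INT convex_halfspace_le)
qed

lemma touching_cone_face_of_normal_cone:
  assumes "convex_body K"
  obtains x where "x \<in> rel_interior (supp_set K z)"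
    and "touching_cone K z face_of normal_cone K x"
    and "z \<in> rel_interior (touching_cone K z)"
proof -
  define x where "x = (SOME x. x \<in> rel_interior (supp_set K z))"
  have "convex (supp_set K z)"
    using assms convex_Int[of K "{y. y \<bullet> z = supp K z}"] convex_hyperplane[of z "supp K z"]
    unfolding convex_body_def supp_set_def by (simp add: Int_def inner_commute)
  then have "rel_interior (supp_set K z) \<noteq> {}"
    using supp_set_nonempty[OF assms] rel_interior_eq_empty by blast
  then have x: "x \<in> rel_interior (supp_set K z)"
    unfolding x_def by (metis ex_in_conv someI_ex)
  then have "x \<in> K" "z \<in> normal_cone K x"
    using rel_interior_subset unfolding supp_set_def normal_cone_def by auto
  moreover have "compact K" using assms convex_body_def by auto
  ultimately obtain F where F: "F face_of normal_cone K x" "z \<in> rel_interior F"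
    using exists_face_of_rel_interior convex_normal_cone by metis
  have "touching_cone K z = F"
    unfolding touching_cone_def normal_cone_set_def x_def[symmetric]
    using F by (intro the_equality) (auto dest: face_of_eq[of F])
  then show ?thesis using that x F by blast
qed

lemma in_span_touching_cone:
  "convex_body K \<Longrightarrow> z \<in> span (touching_cone K z)"
  by (metis touching_cone_face_of_normal_cone rel_interior_subset span_superset subsetD)

lemma touching_space_orthogonal:
  "convex_body K \<Longrightarrow> touching_space K z \<subseteq> {w. w \<bullet> z = 0}"
  using in_span_touching_cone
  unfolding touching_space_def orthogonal_comp_def orthogonal_def
  by (fastforce simp: inner_commute)

lemma orthogonal_comp_span: "orthogonal_comp (span X) = orthogonal_comp X"
proof
  show "orthogonal_comp X \<subseteq> orthogonal_comp (span X)"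
  proof
    fix x assume "x \<in> orthogonal_comp X"
    then have "span X \<subseteq> {y. y \<bullet> x = 0}"
      unfolding orthogonal_comp_def orthogonal_def
      by (intro span_minimal subspace_hyperplane2) auto
    then show "x \<in> orthogonal_comp (span X)"
      unfolding orthogonal_comp_def orthogonal_def by auto
  qed
qed (use span_superset in \<open>auto simp: orthogonal_comp_def\<close>)

lemma dim_orthogonal_comp:
  fixes X :: "'a::euclidean_space set"
  shows "dim (orthogonal_comp X) = DIM('a) - dim X"
proof -
  have "dim {y \<in> UNIV. \<forall>x \<in> span X. orthogonal x y} + dim (span X) = dim (UNIV::'a set)"
    by (rule dim_subspace_orthogonal_to_vectors) auto
  moreover have "{y \<in> UNIV. \<forall>x \<in> span X. orthogonal x y} = orthogonal_comp X"
    using orthogonal_comp_span[of X] unfolding orthogonal_comp_def by auto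
  ultimately show ?thesis by simp
qed

lemma dim_orthogonal_comp_pair:
  fixes e z :: "'a::euclidean_space"
  assumes "norm e = 1" "norm z = 1"
  shows "dim (orthogonal_comp {e, z}) = (if z \<in> {e, -e} then DIM('a) - 1 else DIM('a) - 2)"
proof -
  have "z \<in> span {e} \<longleftrightarrow> z \<in> {e, -e}"
  proof
    assume "z \<in> span {e}"
    then obtain k where "z = k *\<^sub>R e" by (auto simp: span_singleton)
    moreover from this have "\<bar>k\<bar> = 1" using assms by simp
    ultimately show "z \<in> {e, -e}" by (auto simp: abs_if split: if_splits)
  qed (auto intro: span_base span_neg)
  moreover have "e \<noteq> 0" using assms by auto
  ultimately have "dim {e, z} = (if z \<in> {e, -e} then 1 else 2)"
    using dim_insert[of z "{e}"] by (simp add: insert_commute)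
  then show ?thesis by (simp add: dim_orthogonal_comp)
qed

lemma independent_image_if_dim_eq_card:
  fixes a :: "'i \<Rightarrow> 'a::euclidean_space"
  assumes "finite I" "dim (a ` I) = card I"
  shows "inj_on a I" "independent (a ` I)"
proof -
  have "dim (a ` I) \<le> card (a ` I)"
    using assms(1) by (intro dim_le_card span_superset) auto
  then have "card (a ` I) = card I" using assms card_image_le[of I a] by linarith
  then show "inj_on a I" by (rule eq_card_imp_inj_on[OF assms(1)])
  show "independent (a ` I)"
    using card_eq_dim[of "a ` I" "a ` I"] \<open>card (a ` I) = card I\<close> assms
    by (simp add: span_superset)
qed

lemma obtain_two_block_enumeration:
  assumes "finite B" "finite D" "card B = j" "card D = m - j"
  obtains a :: "nat \<Rightarrow> 'a" where "a ` {..<j} = B" "a ` {j..<m} = D"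
proof -
  obtain f where f: "bij_betw f {..<j} B"
    using bij_betw_iff_card[OF finite_lessThan assms(1)] assms(3) by auto
  obtain g where g: "bij_betw g {j..<m} D"
    using bij_betw_iff_card[OF finite_atLeastLessThan assms(2)] assms(4) by auto
  define a where "a i = (if i < j then f i else g i)" for i
  have "a ` {..<j} = B" using f unfolding bij_betw_def a_def by (auto simp: image_def)
  moreover have "a ` {j..<m} = D" using g unfolding bij_betw_def a_def by (auto simp: image_def)
  ultimately show ?thesis using that by blast
qed

lemma ex_two_block_family_iff:
  fixes S W :: "'a::euclidean_space set"
  assumes "j \<le> m"
  shows "(\<exists>a. (\<forall>i<m. a i \<in> (if i < j then S else W)) \<and> dim (a ` {..<m}) = m) \<longleftrightarrow>
         (\<exists>B\<subseteq>S. independent B \<and> card B = j \<and> m \<le> dim (B \<union> W))"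
proof
  assume "\<exists>a. (\<forall>i<m. a i \<in> (if i < j then S else W)) \<and> dim (a ` {..<m}) = m"
  then obtain a where a: "\<forall>i<m. a i \<in> (if i < j then S else W)" and d: "dim (a ` {..<m}) = m"
    by blast
  have inj: "inj_on a {..<m}" and ind: "independent (a ` {..<m})"
    using independent_image_if_dim_eq_card[of "{..<m}" a] d by auto
  have sub: "{..<j} \<subseteq> {..<m}" using assms by auto
  have "a i \<in> S" if "i < j" for i using a[rule_format, of i] that assms by simp
  then have "a ` {..<j} \<subseteq> S" by auto
  moreover have "independent (a ` {..<j})" using ind sub by (meson image_mono independent_mono)
  moreover have "card (a ` {..<j}) = j" using inj sub by (simp add: card_image inj_on_subset)
  moreover have "a i \<in> a ` {..<j} \<union> W" if "i < m" for i
    using a[rule_format, OF that] by (cases "i < j") auto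
  then have "a ` {..<m} \<subseteq> a ` {..<j} \<union> W" by auto
  then have "m \<le> dim (a ` {..<j} \<union> W)" using d by (metis dim_subset)
  ultimately show "\<exists>B\<subseteq>S. independent B \<and> card B = j \<and> m \<le> dim (B \<union> W)" by blast
next
  assume "\<exists>B\<subseteq>S. independent B \<and> card B = j \<and> m \<le> dim (B \<union> W)"
  then obtain B where B: "B \<subseteq> S" "independent B" "card B = j" "m \<le> dim (B \<union> W)" by blast
  obtain C where C: "B \<subseteq> C" "C \<subseteq> B \<union> W" "independent C" "B \<union> W \<subseteq> span C"
    using maximal_independent_subset_extend[of B "B \<union> W"] B(2) by blast
  have "finite B" "finite C" using B(2) C(3) independent_bound by blast+
  have "m \<le> card C" using B(4) dim_le_card[OF C(4) \<open>finite C\<close>] by simp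
  then have "m - j \<le> card (C - B)" using card_Diff_subset[OF \<open>finite B\<close> C(1)] B(3) by simp
  then obtain D where D: "D \<subseteq> C - B" "card D = m - j" "finite D"
    by (rule obtain_subset_with_card_n)
  obtain a where "a ` {..<j} = B" "a ` {j..<m} = D"
    using obtain_two_block_enumeration[OF \<open>finite B\<close> D(3) B(3) D(2)] .
  moreover have "{..<m} = {..<j} \<union> {j..<m}" using assms by auto
  ultimately have am: "a ` {..<m} = B \<union> D" by (simp add: image_Un)
  have "independent (B \<union> D)" using C(1,3) D(1) independent_mono by blast
  moreover have "card (B \<union> D) = m"
    using D B(3) assms \<open>finite B\<close> by (subst card_Un_disjoint) auto
  ultimately have "dim (a ` {..<m}) = m" using am by (simp add: dim_eq_card_independent)
  moreover have "a i \<in> (if i < j then S else W)" if "i < m" for i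
  proof (cases "i < j")
    case True
    then show ?thesis using \<open>a ` {..<j} = B\<close> B(1) by auto
  next
    case False
    then have "a i \<in> D" using that \<open>a ` {j..<m} = D\<close> by auto
    then show ?thesis using False C(2) D(1) by auto
  qed
  ultimately show "\<exists>a. (\<forall>i<m. a i \<in> (if i < j then S else W)) \<and> dim (a ` {..<m}) = m"
    by blast
qed

lemma ex_independent_subset_iff:
  fixes S W :: "'a::euclidean_space set"
  assumes "subspace W" "1 \<le> j" "m \<le> dim W + 1"
  shows "(\<exists>B\<subseteq>S. independent B \<and> card B = j \<and> m \<le> dim (B \<union> W)) \<longleftrightarrow>
         j \<le> dim S \<and> (dim W < m \<longrightarrow> \<not> S \<subseteq> W)"
proof
  assume "\<exists>B\<subseteq>S. independent B \<and> card B = j \<and> m \<le> dim (B \<union> W)"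
  then obtain B where B: "B \<subseteq> S" "independent B" "card B = j" "m \<le> dim (B \<union> W)" by blast
  have "j \<le> dim S" using B(3) dim_subset[OF B(1)] dim_eq_card_independent[OF B(2)] by simp
  moreover have "\<not> S \<subseteq> W" if "dim W < m"
  proof
    assume "S \<subseteq> W"
    then have "dim (B \<union> W) \<le> dim W" using B(1) by (intro dim_subset) auto
    with B(4) that show False by simp
  qed
  ultimately show "j \<le> dim S \<and> (dim W < m \<longrightarrow> \<not> S \<subseteq> W)" by blast
next
  assume R: "j \<le> dim S \<and> (dim W < m \<longrightarrow> \<not> S \<subseteq> W)"
  show "\<exists>B\<subseteq>S. independent B \<and> card B = j \<and> m \<le> dim (B \<union> W)"
  proof (cases "m \<le> dim W")
    case True
    obtain C where C: "C \<subseteq> S" "independent C" "S \<subseteq> span C" "card C = dim S"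
      by (rule basis_exists)
    then have "j \<le> card C" using R by simp
    then obtain B where "B \<subseteq> C" "card B = j" "finite B" by (rule obtain_subset_with_card_n)
    moreover have "m \<le> dim (B \<union> W)" using True dim_subset[of W "B \<union> W"] by simp
    ultimately show ?thesis using C independent_mono by blast
  next
    case False
    then obtain v where v: "v \<in> S" "v \<notin> W" using R by auto
    then have "v \<noteq> 0" using assms(1) subspace_0 by blast
    then obtain C where C: "v \<in> C" "C \<subseteq> S" "independent C" "S \<subseteq> span C"
      using maximal_independent_subset_extend[of "{v}" S] v(1) independent_insertI[of v "{}"]
      by auto
    have "finite C" using C(3) independent_bound by blast
    have "j \<le> card C" using R dim_le_card[OF C(4) \<open>finite C\<close>] by linarith
    then have "j - 1 \<le> card (C - {v})" using C(1) \<open>finite C\<close> by simp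
    then obtain D where D: "D \<subseteq> C - {v}" "card D = j - 1" "finite D"
      by (rule obtain_subset_with_card_n)
    have "card (insert v D) = j" using D assms(2) by (subst card_insert_disjoint) auto
    moreover have "insert v D \<subseteq> C" using C(1) D(1) by auto
    then have "independent (insert v D)" using C(3) independent_mono by blast
    moreover have "dim (insert v W) = dim W + 1"
      using v(2) assms(1) by (metis dim_insert span_eq_iff)
    then have "m \<le> dim (insert v D \<union> W)"
      using assms(3) dim_subset[of "insert v W" "insert v D \<union> W"] by (simp add: subset_insertI2)
    ultimately show ?thesis using \<open>insert v D \<subseteq> C\<close> C(2) by blast
  qed
qed

lemma convex_body_disc: "convex_body (cball 0 1 \<inter> {x. x \<bullet> e = 0})"
proof -
  have "closed {x. x \<bullet> e = 0}" "convex {x. x \<bullet> e = 0}"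
    using closed_hyperplane[of e 0] convex_hyperplane[of e 0] by (simp_all add: inner_commute)
  moreover have "0 \<in> cball 0 1 \<inter> {x. x \<bullet> e = 0}" by simp
  ultimately show ?thesis
    unfolding convex_body_def by (metis compact_Int_closed compact_cball convex_Int convex_cball empty_iff)
qed

lemma supp_disc:
  fixes e :: "'a::euclidean_space"
  assumes "norm e = 1"
  shows "supp (cball 0 1 \<inter> {x. x \<bullet> e = 0}) u = norm (u - (u \<bullet> e) *\<^sub>R e)"
proof -
  define D where "D = cball (0::'a) 1 \<inter> {x. x \<bullet> e = 0}"
  define p where "p = u - (u \<bullet> e) *\<^sub>R e"
  have pe: "p \<bullet> e = 0" using assms by (simp add: p_def inner_diff_left dot_square_norm)
  have up: "x \<bullet> u = x \<bullet> p" if "x \<bullet> e = 0" for x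
    using that by (simp add: p_def inner_diff_right inner_commute)
  have le: "x \<bullet> u \<le> norm p" if "x \<in> D" for x
  proof -
    have "x \<bullet> u \<le> norm x * norm p" using up that norm_cauchy_schwarz[of x p] by (simp add: D_def)
    also have "\<dots> \<le> norm p" using that by (simp add: D_def mult_left_le_one_le)
    finally show ?thesis .
  qed
  define y where "y = (if p = 0 then 0 else (1 / norm p) *\<^sub>R p)"
  have "y \<in> D" "y \<bullet> u = norm p"
    using pe up[of p] by (auto simp: D_def y_def dot_square_norm power2_eq_square)
  then have "supp D u = norm p"
    using le supp_eqI[of D y u] convex_body_disc[of e] by (simp add: D_def convex_body_def)
  then show ?thesis by (simp add: D_def p_def)
qed

lemma normal_cone_disc:
  fixes e u :: "'a::euclidean_space"
  defines "p \<equiv> u - (u \<bullet> e) *\<^sub>R e"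
  assumes "norm e = 1" "x \<in> cball 0 1 \<inter> {x. x \<bullet> e = 0}"
    and "u \<in> normal_cone (cball 0 1 \<inter> {x. x \<bullet> e = 0}) x"
  shows "p = norm p *\<^sub>R x"
proof (cases "p = 0")
  case False
  have "x \<bullet> p = norm p"
    using assms supp_disc[OF assms(2)] by (simp add: normal_cone_def p_def inner_diff_right)
  moreover have "norm x \<le> 1" using assms by simp
  ultimately have "x \<bullet> p = norm x * norm p"
    using norm_cauchy_schwarz[of x p] False mult_left_le_one_le[of "norm p" "norm x"] by auto
  moreover have "norm p \<le> norm x * norm p"
    using \<open>x \<bullet> p = norm p\<close> norm_cauchy_schwarz[of x p] by simp
  then have "norm x = 1" using \<open>norm x \<le> 1\<close> False by (simp add: mult_le_cancel_right1)
  ultimately show ?thesis using norm_cauchy_schwarz_eq[of x p] by simp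
qed simp

lemma rel_interior_disc:
  fixes e :: "'a::euclidean_space"
  shows "rel_interior (cball 0 1 \<inter> {x. x \<bullet> e = 0}) = ball 0 1 \<inter> {x. x \<bullet> e = 0}"
proof -
  have "affine {x. x \<bullet> e = 0}" using affine_hyperplane[of e 0] by (simp add: inner_commute)
  moreover have "0 \<in> interior (cball 0 1) \<inter> {x. x \<bullet> e = 0}" by simp
  then have "interior (cball 0 1) \<inter> {x. x \<bullet> e = 0} \<noteq> {}" by blast
  ultimately show ?thesis using rel_interior_convex_Int_affine[OF convex_cball] by simp
qed

lemma unit_in_span_touching_cone_disc:
  fixes e z :: "'a::euclidean_space"
  assumes "norm e = 1"
  shows "e \<in> span (touching_cone (cball 0 1 \<inter> {x. x \<bullet> e = 0}) z)"
proof -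
  let ?D = "cball 0 1 \<inter> {x::'a. x \<bullet> e = 0}"
  obtain x where x: "x \<in> rel_interior (supp_set ?D z)"
    and T: "touching_cone ?D z face_of normal_cone ?D x"
    and zT: "z \<in> rel_interior (touching_cone ?D z)"
    using touching_cone_face_of_normal_cone[OF convex_body_disc] by blast
  have "x \<in> ?D" "x \<bullet> z = supp ?D z"
    using x rel_interior_subset unfolding supp_set_def by auto
  txt \<open>The support function of the disc ignores the \<open>e\<close>-component, so \<open>z \<plusminus> e\<close> are normals
    at \<open>x\<close>; the face containing \<open>z\<close> in its relative interior then contains both.\<close>
  have shift: "z + t *\<^sub>R e \<in> normal_cone ?D x" for t
  proof -
    have "(z + t *\<^sub>R e) - ((z + t *\<^sub>R e) \<bullet> e) *\<^sub>R e = z - (z \<bullet> e) *\<^sub>R e"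
      using assms by (simp add: inner_add_left dot_square_norm algebra_simps)
    then have "supp ?D (z + t *\<^sub>R e) = supp ?D z"
      unfolding supp_disc[OF assms] by (simp only:)
    then show ?thesis
      using \<open>x \<in> ?D\<close> \<open>x \<bullet> z = supp ?D z\<close> by (simp add: normal_cone_def inner_add_right)
  qed
  have "z \<in> open_segment (z - e) (z + e)"
    using assms midpoint_in_open_segment[of "z - e" "z + e"]
    by (auto simp: midpoint_def algebra_simps simp flip: scaleR_2)
  moreover have "z - e \<in> normal_cone ?D x" "z + e \<in> normal_cone ?D x"
    using shift[of "-1"] shift[of 1] by simp_all
  ultimately have "z - e \<in> touching_cone ?D z" "z + e \<in> touching_cone ?D z"
    using face_ofD[OF T] zT rel_interior_subset by blast+
  then have "(1/2) *\<^sub>R ((z + e) - (z - e)) \<in> span (touching_cone ?D z)"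
    by (intro span_mul span_diff span_base)
  then show ?thesis by (simp add: algebra_simps flip: scaleR_add_left)
qed

lemma touching_cone_disc_subset:
  fixes e z :: "'a::euclidean_space"
  assumes "norm e = 1"
  shows "touching_cone (cball 0 1 \<inter> {x. x \<bullet> e = 0}) z \<subseteq> span {e, z}"
proof -
  let ?D = "cball 0 1 \<inter> {x::'a. x \<bullet> e = 0}"
  let ?P = "\<lambda>u. u - (u \<bullet> e) *\<^sub>R e"
  obtain x where x: "x \<in> rel_interior (supp_set ?D z)"
    and T: "touching_cone ?D z face_of normal_cone ?D x"
    using touching_cone_face_of_normal_cone[OF convex_body_disc] by blast
  have xD: "x \<in> ?D" and "z \<in> normal_cone ?D x"
    using x rel_interior_subset unfolding supp_set_def normal_cone_def by auto
  have proj: "?P u = norm (?P u) *\<^sub>R x" if "u \<in> normal_cone ?D x" for u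
    using normal_cone_disc[OF assms xD that] .
  txt \<open>A normal vector with nonzero projection forces \<open>norm x = 1\<close>, which excludes
    \<open>z = \<plusminus>e\<close> (then \<open>x\<close> lies in the relative interior of the disc) and otherwise makes \<open>x\<close>
    the normalised projection of \<open>z\<close>.\<close>
  have "u \<in> span {e, z}" if u: "u \<in> normal_cone ?D x" for u
  proof (cases "?P u = 0")
    case True
    then have "u = (u \<bullet> e) *\<^sub>R e" by (metis eq_iff_diff_eq_0)
    then show ?thesis by (metis insertI1 span_base span_mul)
  next
    case False
    have "norm (?P u) = norm (?P u) * norm x"
      using arg_cong[OF proj[OF u], of norm] by simp
    then have "norm x = 1" using False by simp
    have "?P z \<noteq> 0"
    proof
      assume Pz: "?P z = 0"
      have "y \<bullet> z = y \<bullet> ?P z" if "y \<in> ?D" for y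
        using that by (simp add: inner_diff_right)
      then have "y \<bullet> z = 0" if "y \<in> ?D" for y
        using that Pz by simp
      then have "supp_set ?D z = ?D"
        using supp_disc[OF assms, of z] Pz unfolding supp_set_def by auto
      then have "norm x < 1" using x rel_interior_disc[of e] by auto
      with \<open>norm x = 1\<close> show False by simp
    qed
    then have "x = (1 / norm (?P z)) *\<^sub>R (norm (?P z) *\<^sub>R x)" by simp
    also have "\<dots> = (1 / norm (?P z)) *\<^sub>R ?P z"
      by (simp only: proj[OF \<open>z \<in> normal_cone ?D x\<close>, symmetric])
    finally have "x \<in> span {e, z}" by (simp add: span_base span_diff span_mul)
    moreover have "e \<in> span {e, z}" by (simp add: span_base)
    moreover have "u = norm (?P u) *\<^sub>R x + (u \<bullet> e) *\<^sub>R e" by (simp add: proj[OF u, symmetric])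
    ultimately show ?thesis by (metis span_add span_mul)
  qed
  then show ?thesis using face_of_imp_subset[OF T] by blast
qed

lemma touching_space_disc:
  fixes e z :: "'a::euclidean_space"
  assumes "norm e = 1"
  shows "touching_space (cball 0 1 \<inter> {x. x \<bullet> e = 0}) z = orthogonal_comp {e, z}"
proof -
  let ?T = "touching_cone (cball 0 1 \<inter> {x::'a. x \<bullet> e = 0}) z"
  have "span ?T \<subseteq> span {e, z}"
    using touching_cone_disc_subset[OF assms] by (simp add: span_minimal)
  moreover have "e \<in> span ?T" "z \<in> span ?T"
    using unit_in_span_touching_cone_disc[OF assms] in_span_touching_cone[OF convex_body_disc]
    by blast+
  then have "span {e, z} \<subseteq> span ?T" by (intro span_minimal) auto
  ultimately show ?thesis
    unfolding touching_space_def using orthogonal_comp_span by (metis subset_antisym)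
qed

lemma ext_dirs_iff:
  fixes Ks :: "'a::euclidean_space set list"
  assumes "length Ks = DIM('a) - 1"
  shows "z \<in> ext_dirs Ks \<longleftrightarrow> norm z = 1 \<and>
    (\<exists>a. (\<forall>i<length Ks. a i \<in> touching_space (Ks ! i) z) \<and> dim (a ` {..<length Ks}) = length Ks)"
proof -
  let ?I = "{..<length Ks}"
  have in_hyperplane: "T \<subseteq> {x. b \<bullet> x = 0} \<longleftrightarrow> b \<in> orthogonal_comp (span T)" for T and b :: 'a
    unfolding orthogonal_comp_span by (auto simp: orthogonal_comp_def orthogonal_def inner_commute)
  have dim_Inter: "dim (\<Inter>i\<in>?I. {x. a i \<bullet> x = 0}) = 1 \<longleftrightarrow> dim (a ` ?I) = length Ks"
    for a :: "nat \<Rightarrow> 'a"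
  proof -
    have "(\<Inter>i\<in>?I. {x. a i \<bullet> x = 0}) = orthogonal_comp (a ` ?I)"
      unfolding orthogonal_comp_def orthogonal_def by auto
    then have "dim (\<Inter>i\<in>?I. {x. a i \<bullet> x = 0}) = DIM('a) - dim (a ` ?I)"
      by (simp add: dim_orthogonal_comp)
    then show ?thesis
      using dim_subset_UNIV[of "a ` ?I"] DIM_positive[where 'a='a] assms by linarith
  qed
  show ?thesis
  proof
    assume "z \<in> ext_dirs Ks"
    then obtain E where "norm z = 1"
      and E: "\<forall>i<length Ks. lin_hyperplane (E i) \<and> touching_cone (Ks ! i) z \<subseteq> E i"
      and "dim (\<Inter>i\<in>?I. E i) = 1"
      unfolding ext_dirs_def by blast
    obtain a where a: "\<And>i. i < length Ks \<Longrightarrow> E i = {x. a i \<bullet> x = 0}"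
      using E unfolding lin_hyperplane_def by metis
    have "(\<Inter>i\<in>?I. E i) = (\<Inter>i\<in>?I. {x. a i \<bullet> x = 0})" using a by auto
    then have "dim (a ` ?I) = length Ks" using \<open>dim (\<Inter>i\<in>?I. E i) = 1\<close> dim_Inter by simp
    moreover have "\<forall>i<length Ks. a i \<in> touching_space (Ks ! i) z"
      using E a in_hyperplane unfolding touching_space_def by auto
    ultimately show "norm z = 1 \<and> (\<exists>a. (\<forall>i<length Ks. a i \<in> touching_space (Ks ! i) z)
        \<and> dim (a ` ?I) = length Ks)" using \<open>norm z = 1\<close> by blast
  next
    assume "norm z = 1 \<and> (\<exists>a. (\<forall>i<length Ks. a i \<in> touching_space (Ks ! i) z)
        \<and> dim (a ` ?I) = length Ks)"
    then obtain a where "norm z = 1" and a: "\<forall>i<length Ks. a i \<in> touching_space (Ks ! i) z"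
      and d: "dim (a ` ?I) = length Ks" by blast
    have "independent (a ` ?I)" using independent_image_if_dim_eq_card(2)[of ?I a] d by simp
    then have "0 \<notin> a ` ?I" by (metis dependent_zero)
    then have "\<forall>i<length Ks. lin_hyperplane {x. a i \<bullet> x = 0}"
      unfolding lin_hyperplane_def by (metis lessThan_iff rev_image_eqI)
    moreover have "\<forall>i<length Ks. touching_cone (Ks ! i) z \<subseteq> {x. a i \<bullet> x = 0}"
      using a in_hyperplane unfolding touching_space_def by blast
    moreover have "dim (\<Inter>i\<in>?I. {x. a i \<bullet> x = 0}) = 1" using d dim_Inter by simp
    ultimately show "z \<in> ext_dirs Ks"
      unfolding ext_dirs_def using \<open>norm z = 1\<close>
      by (intro CollectI conjI exI[of _ "\<lambda>i. {x. a i \<bullet> x = 0}"]) auto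
  qed
qed

lemma ext_dirs_replicate_disc_iff:
  fixes K :: "'a::euclidean_space set" and e z :: 'a
  assumes "convex_body K" "norm e = 1" "norm z = 1" "1 \<le> j" "j \<le> DIM('a) - 1"
  shows "z \<in> ext_dirs (replicate j K @ replicate (DIM('a) - 1 - j) (cball 0 1 \<inter> {x. x \<bullet> e = 0}))
     \<longleftrightarrow> j \<le> dim (touching_space K z) \<and>
         (z \<notin> {e, -e} \<longrightarrow> \<not> touching_space K z \<subseteq> {x. x \<bullet> e = 0})"
proof -
  define m where "m = DIM('a) - 1"
  define Ks where "Ks = replicate j K @ replicate (m - j) (cball 0 1 \<inter> {x. x \<bullet> e = 0})"
  define S where "S = touching_space K z"
  define W where "W = orthogonal_comp {e, z}"
  have "length Ks = m" using assms(5) by (simp add: Ks_def m_def)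
  moreover have "touching_space (Ks ! i) z = (if i < j then S else W)" if "i < m" for i
    using that touching_space_disc[OF assms(2)] by (simp add: Ks_def S_def W_def nth_append)
  ultimately have "z \<in> ext_dirs Ks \<longleftrightarrow>
      (\<exists>a. (\<forall>i<m. a i \<in> (if i < j then S else W)) \<and> dim (a ` {..<m}) = m)"
    using ext_dirs_iff[of Ks z] assms(3) by (simp add: m_def)
  also have "\<dots> \<longleftrightarrow> (\<exists>B\<subseteq>S. independent B \<and> card B = j \<and> m \<le> dim (B \<union> W))"
    using assms(5) by (intro ex_two_block_family_iff) (simp add: m_def)
  also have "\<dots> \<longleftrightarrow> j \<le> dim S \<and> (dim W < m \<longrightarrow> \<not> S \<subseteq> W)"
  proof (rule ex_independent_subset_iff)
    show "subspace W" by (simp add: W_def subspace_orthogonal_comp)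
    show "m \<le> dim W + 1"
      using dim_orthogonal_comp_pair[OF assms(2,3)] assms(4,5) by (auto simp: W_def m_def)
  qed (rule assms(4))
  finally have "z \<in> ext_dirs Ks \<longleftrightarrow> j \<le> dim S \<and> (dim W < m \<longrightarrow> \<not> S \<subseteq> W)" .
  moreover have "dim W < m \<longleftrightarrow> z \<notin> {e, -e}"
    using dim_orthogonal_comp_pair[OF assms(2,3)] assms(4,5) by (auto simp: m_def W_def)
  moreover have "S \<subseteq> W \<longleftrightarrow> S \<subseteq> {x. x \<bullet> e = 0}"
    using touching_space_orthogonal[OF assms(1), of z]
    by (auto simp: S_def W_def orthogonal_comp_def orthogonal_def inner_commute)
  ultimately show ?thesis by (simp add: Ks_def S_def m_def)
qed

theorem lemma3p9:
  fixes K :: "'a::euclidean_space set" and e :: 'a and j :: nat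
  assumes "DIM('a) \<ge> 3" and "e \<in> Basis"
    and "1 \<le> j" and "j \<le> DIM('a) - 2"
    and "convex_body K"
  defines "L \<equiv> {x::'a. x \<bullet> e = 0}"
  defines "BL \<equiv> cball (0::'a) 1 \<inter> L"
  shows "(\<forall>z\<in>{e, -e}.
            z \<in> ext_dirs (replicate j K @ replicate (DIM('a) - 1 - j) BL)
            \<longleftrightarrow> dim (touching_space K z) \<ge> j)
       \<and> (\<forall>z\<in>sphere 0 1 - {e, -e}.
            z \<in> ext_dirs (replicate j K @ replicate (DIM('a) - 1 - j) BL)
            \<longleftrightarrow> dim (touching_space K z) \<ge> j \<and> \<not> touching_space K z \<subseteq> L)"
proof -
  have e: "norm e = 1" using assms(2) by simp
  have "j \<le> DIM('a) - 1" using assms(4) by simp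
  note ext_iff = ext_dirs_replicate_disc_iff[OF assms(5) e _ assms(3) this]
  show ?thesis
  proof (intro conjI ballI)
    fix z assume "z \<in> {e, -e}"
    then show "z \<in> ext_dirs (replicate j K @ replicate (DIM('a) - 1 - j) BL)
        \<longleftrightarrow> dim (touching_space K z) \<ge> j"
      using ext_iff[of z] e by (auto simp: BL_def L_def)
  next
    fix z assume "z \<in> sphere 0 1 - {e, -e}"
    then show "z \<in> ext_dirs (replicate j K @ replicate (DIM('a) - 1 - j) BL)
        \<longleftrightarrow> dim (touching_space K z) \<ge> j \<and> \<not> touching_space K z \<subseteq> L"
      using ext_iff[of z] by (simp add: BL_def L_def)
  qed
qed

end
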